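(* Let $C$ be a smooth projective curve of genus $g\ge1$ over $\mathbb{C}$, $P,Q,R\in C$ distinct, and $f$ a rational function with $\operatorname{div}(f)=NQ-NR$, $N\ge1$, $f(P)=1$. Let $C_{QR}=C\setminus\{Q,R\}$, and let $G\subset\pi_1(C_{QR},P)$ be the subgroup generated by the loops $\alpha_i={\alpha'_i}^N\beta_Q^{-m_i}$, $1\le i\le 2g$, described in the context. Then the abelianization of $G$ is isomorphic to the subgroup of index $N^{2g}$ of the abelianization of $\pi_1(C,P)$ given by multiplication by $N$: $$G/[G,G]\cong N\cdot\big(\pi_1(C,P)/[\pi_1(C,P),\pi_1(C,P)]\big).$$
   Context: The group $\pi_1(C_{QR},P)$ is free on $2g+1$ generators $\alpha'_1,\dots,\alpha'_{2g},\beta_Q$, where the $\alpha'_i$ are loops based at $P$ coming from the edges of the fundamental $4g$-gon of $C$ (so that their images under the inclusion $i:C_{QR}\hookrightarrow C$ are the standard generators of $\pi_1(C,P)$, subject to the single product-of-commutators relation), and $\beta_Q$ is a small simple loop around $Q$ based at $P$. The map $f:C_{QR}\to\mathbb{P}^1\setminus\{0,\infty\}$ induces $f_*:\pi_1(C_{QR},P)\to\pi_1(\mathbb{P}^1\setminus\{0,\infty\},1)\cong\mathbb{Z}=\langle\beta_0\rangle$, with $f_*(\beta_Q)=\beta_0^N$; define integers $m_i$ by $f_*(\alpha'_i)=\beta_0^{m_i}$, so that $\alpha_i={\alpha'_i}^N\beta_Q^{-m_i}$ lies in $\ker f_*$. *)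

theory Defs
  imports "HOL-Algebra.Algebra"
begin

text \<open>A letter is a pair (generator, sign); (x, True) is x and (x, False) is its inverse.\<close>

definition inv_letter :: "'a \<times> bool \<Rightarrow> 'a \<times> bool" where
  "inv_letter l = (fst l, \<not> snd l)"

fun cancel_letter :: "'a \<times> bool \<Rightarrow> ('a \<times> bool) list \<Rightarrow> ('a \<times> bool) list" where
  "cancel_letter l [] = [l]"
| "cancel_letter l (m # ms) = (if m = inv_letter l then ms else l # m # ms)"

definition reduce_word :: "('a \<times> bool) list \<Rightarrow> ('a \<times> bool) list" where
  "reduce_word w = foldr cancel_letter w []"

fun reduced_word :: "('a \<times> bool) list \<Rightarrow> bool" where
  "reduced_word [] = True"
| "reduced_word [l] = True"
| "reduced_word (l # m # ms) = (m \<noteq> inv_letter l \<and> reduced_word (m # ms))"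

definition free_group :: "'a set \<Rightarrow> ('a \<times> bool) list monoid" where
  "free_group S = \<lparr>carrier = {w. fst ` set w \<subseteq> S \<and> reduced_word w},
                   monoid.mult = (\<lambda>u v. reduce_word (u @ v)),
                   one = []\<rparr>"

definition free_gen :: "'a \<Rightarrow> ('a \<times> bool) list" where
  "free_gen x = [(x, True)]"

definition normal_closure :: "('a, 'b) monoid_scheme \<Rightarrow> 'a set \<Rightarrow> 'a set" where
  "normal_closure G S =
     generate G {g \<otimes>\<^bsub>G\<^esub> s \<otimes>\<^bsub>G\<^esub> inv\<^bsub>G\<^esub> g | g s. g \<in> carrier G \<and> s \<in> S}"

definition abelianization :: "('a, 'b) monoid_scheme \<Rightarrow> 'a set monoid" where
  "abelianization G = G Mod (derived G (carrier G))"

text \<open>Product of commutators [a_1,a_2]...[a_{2g-1},a_{2g}] in the free group on {0..<2g}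
  (generators a_{2k+1} = index 2k, a_{2k+2} = index 2k+1).\<close>
definition surface_relator :: "nat \<Rightarrow> (nat \<times> bool) list" where
  "surface_relator g =
     foldr (\<lambda>k w. let F = free_group {0..<2*g}; a = free_gen (2*k); b = free_gen (2*k+1) in
              a \<otimes>\<^bsub>F\<^esub> b \<otimes>\<^bsub>F\<^esub> inv\<^bsub>F\<^esub> a \<otimes>\<^bsub>F\<^esub> inv\<^bsub>F\<^esub> b \<otimes>\<^bsub>F\<^esub> w)
       [0..<g] []"

text \<open>Fundamental group of a closed orientable surface of genus g (the model of pi_1(C,P)).\<close>
definition surface_group :: "nat \<Rightarrow> (nat \<times> bool) list set monoid" where
  "surface_group g = free_group {0..<2*g} Mod
     normal_closure (free_group {0..<2*g}) {surface_relator g}"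

text \<open>Model of pi_1(C_QR,P): free on alpha'_i (index i < 2g) and beta_Q (index 2g).\<close>
definition punctured_group :: "nat \<Rightarrow> (nat \<times> bool) list monoid" where
  "punctured_group g = free_group {0..2*g}"

end

theory Submission
  imports Defs
begin

text \<open>
  Counting the exponents of the generators \<open>\<alpha>'\<^sub>1, ..., \<alpha>'\<^sub>2\<^sub>g\<close> is a homomorphism from the free
  group \<open>\<pi>\<^sub>1(C\<^sub>Q\<^sub>R,P)\<close> to \<open>\<int>\<^sup>2\<^sup>g\<close>.  It ignores \<open>\<beta>\<^sub>Q\<close>, so it sends \<open>\<alpha>\<^sub>i\<close> to \<open>N e\<^sub>i\<close>, and it kills
  the surface relator, a product of commutators, so it also induces \<open>\<pi>\<^sub>1(C,P) \<rightarrow> \<int>\<^sup>2\<^sup>g\<close> with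
  \<open>\<alpha>'\<^sub>i \<mapsto> e\<^sub>i\<close>.  Now a group generated by \<open>x\<^sub>1, ..., x\<^sub>n\<close> with a homomorphism to \<open>\<int>\<^sup>n\<close> sending
  \<open>x\<^sub>i\<close> to \<open>c e\<^sub>i\<close>, \<open>c \<noteq> 0\<close>, has abelianization \<open>\<int>\<^sup>n\<close>: the abelianization is spanned by the
  images of the \<open>x\<^sub>i\<close>, and the induced map back to \<open>\<int>\<^sup>n\<close> shows that they are independent.  So
  \<open>G/[G,G]\<close> and the abelianization of \<open>\<pi>\<^sub>1(C,P)\<close> are both \<open>\<int>\<^sup>2\<^sup>g\<close>, and in \<open>\<int>\<^sup>2\<^sup>g\<close> the subgroup
  \<open>N\<int>\<^sup>2\<^sup>g\<close> is isomorphic to \<open>\<int>\<^sup>2\<^sup>g\<close> and has index \<open>N\<^sup>2\<^sup>g\<close>.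
\<close>

section \<open>Free groups\<close>

lemma inv_letter_inv_letter [simp]: "inv_letter (inv_letter l) = l"
  by (simp add: inv_letter_def)

lemma reduced_word_ConsD: "reduced_word (l # w) \<Longrightarrow> reduced_word w"
  by (cases w) auto

lemma reduced_word_cancel_letter: "reduced_word w \<Longrightarrow> reduced_word (cancel_letter l w)"
  by (cases w) (auto dest: reduced_word_ConsD)

lemma reduced_word_foldr_cancel_letter:
  "reduced_word r \<Longrightarrow> reduced_word (foldr cancel_letter x r)"
  by (induction x) (auto intro: reduced_word_cancel_letter)

lemma reduced_word_reduce_word: "reduced_word (reduce_word w)"
  unfolding reduce_word_def by (rule reduced_word_foldr_cancel_letter) simp

lemma cancel_letter_cancel_inv_letter:
  "reduced_word w \<Longrightarrow> cancel_letter l (cancel_letter (inv_letter l) w) = w"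
  by (cases w rule: reduced_word.cases) auto

lemma reduce_word_reduced: "reduced_word w \<Longrightarrow> reduce_word w = w"
proof (induction w)
  case Nil
  then show ?case by (simp add: reduce_word_def)
next
  case (Cons l w)
  then have "reduce_word w = w" using reduced_word_ConsD by blast
  then show ?case using Cons.prems by (cases w) (auto simp: reduce_word_def)
qed

lemma reduce_word_idem [simp]: "reduce_word (reduce_word w) = reduce_word w"
  by (simp add: reduce_word_reduced reduced_word_reduce_word)

lemma reduce_word_append: "reduce_word (x @ y) = foldr cancel_letter x (reduce_word y)"
  by (simp add: reduce_word_def)

lemma foldr_cancel_letter_reduce_word:
  "reduced_word r \<Longrightarrow> foldr cancel_letter (reduce_word x) r = foldr cancel_letter x r"
proof (induction x)
  case Nil
  then show ?case by (simp add: reduce_word_def)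
next
  case (Cons l x)
  have reduce_Cons: "reduce_word (l # x) = cancel_letter l (reduce_word x)"
    by (simp add: reduce_word_def)
  show ?case
  proof (cases "reduce_word x")
    case Nil
    then show ?thesis using Cons by (simp add: reduce_Cons)
  next
    case (Cons m ms)
    show ?thesis
    proof (cases "m = inv_letter l")
      case True
      have "foldr cancel_letter x r = cancel_letter (inv_letter l) (foldr cancel_letter ms r)"
        using Cons.IH[OF Cons.prems] Cons True by simp
      then have "cancel_letter l (foldr cancel_letter x r) = foldr cancel_letter ms r"
        using cancel_letter_cancel_inv_letter reduced_word_foldr_cancel_letter Cons.prems by metis
      then show ?thesis using Cons True by (simp add: reduce_Cons)
    next
      case False
      then show ?thesis using Cons.IH[OF Cons.prems] Cons by (simp add: reduce_Cons)
    qed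
  qed
qed

definition inv_word :: "('a \<times> bool) list \<Rightarrow> ('a \<times> bool) list" where
  "inv_word w = rev (map inv_letter w)"

lemma inv_word_inv_word [simp]: "inv_word (inv_word w) = w"
  by (simp add: inv_word_def rev_map comp_def)

lemma fst_set_inv_word [simp]: "fst ` set (inv_word w) = fst ` set w"
  by (force simp: inv_word_def inv_letter_def image_iff)

lemma foldr_cancel_letter_append_inv_word:
  "reduced_word r \<Longrightarrow> foldr cancel_letter (w @ inv_word w) r = r"
proof (induction w arbitrary: r)
  case Nil
  then show ?case by (simp add: inv_word_def)
next
  case (Cons l w)
  have "foldr cancel_letter ((l # w) @ inv_word (l # w)) r
      = cancel_letter l (foldr cancel_letter (w @ inv_word w) (cancel_letter (inv_letter l) r))"
    by (simp add: inv_word_def)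
  also have "\<dots> = cancel_letter l (cancel_letter (inv_letter l) r)"
    using Cons reduced_word_cancel_letter by metis
  also have "\<dots> = r"
    using Cons.prems by (rule cancel_letter_cancel_inv_letter)
  finally show ?case .
qed

lemma set_foldr_cancel_letter: "set (foldr cancel_letter x r) \<subseteq> set x \<union> set r"
proof (induction x)
  case (Cons l x)
  have "set (cancel_letter l w) \<subseteq> insert l (set w)" for w :: "('a \<times> bool) list"
    by (cases w) auto
  then show ?case using Cons by fastforce
qed simp

lemma fst_set_reduce_word: "fst ` set w \<subseteq> S \<Longrightarrow> fst ` set (reduce_word w) \<subseteq> S"
  using set_foldr_cancel_letter[of w "[]"] by (fastforce simp: reduce_word_def)

lemma carrier_free_group: "w \<in> carrier (free_group S) \<longleftrightarrow> fst ` set w \<subseteq> S \<and> reduced_word w"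
  by (simp add: free_group_def)

lemma mult_free_group: "u \<otimes>\<^bsub>free_group S\<^esub> v = reduce_word (u @ v)"
  by (simp add: free_group_def)

lemma one_free_group: "\<one>\<^bsub>free_group S\<^esub> = []"
  by (simp add: free_group_def)

lemma reduce_word_assoc:
  "reduce_word (reduce_word (x @ y) @ z) = reduce_word (x @ reduce_word (y @ z))"
proof -
  have "reduce_word (reduce_word (x @ y) @ z) = foldr cancel_letter (reduce_word (x @ y)) (reduce_word z)"
    by (rule reduce_word_append)
  also have "\<dots> = foldr cancel_letter (x @ y) (reduce_word z)"
    by (rule foldr_cancel_letter_reduce_word[OF reduced_word_reduce_word])
  also have "\<dots> = foldr cancel_letter x (reduce_word (y @ z))"
    by (simp only: reduce_word_append foldr_append comp_def)
  also have "\<dots> = reduce_word (x @ reduce_word (y @ z))"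
    by (simp only: reduce_word_append[of x] reduce_word_idem)
  finally show ?thesis .
qed

theorem group_free_group: "group (free_group S)"
proof (rule groupI)
  fix x y
  assume "x \<in> carrier (free_group S)" "y \<in> carrier (free_group S)"
  then have "fst ` set (reduce_word (x @ y)) \<subseteq> S"
    by (intro fst_set_reduce_word) (auto simp: carrier_free_group)
  then show "x \<otimes>\<^bsub>free_group S\<^esub> y \<in> carrier (free_group S)"
    by (simp add: carrier_free_group mult_free_group reduced_word_reduce_word)
next
  fix x
  assume x: "x \<in> carrier (free_group S)"
  let ?y = "reduce_word (inv_word x)"
  have "?y \<in> carrier (free_group S)"
    using x fst_set_reduce_word[of "inv_word x" S]
    by (simp add: carrier_free_group reduced_word_reduce_word)
  moreover have "?y \<otimes>\<^bsub>free_group S\<^esub> x = []"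
  proof -
    have "?y \<otimes>\<^bsub>free_group S\<^esub> x = foldr cancel_letter (inv_word x) (reduce_word x)"
      by (simp add: mult_free_group reduce_word_append foldr_cancel_letter_reduce_word
          reduced_word_reduce_word)
    also have "\<dots> = foldr cancel_letter (inv_word x @ inv_word (inv_word x)) []"
      by (simp add: reduce_word_def)
    also have "\<dots> = []"
      by (rule foldr_cancel_letter_append_inv_word) simp
    finally show ?thesis .
  qed
  ultimately show "\<exists>y\<in>carrier (free_group S). y \<otimes>\<^bsub>free_group S\<^esub> x = \<one>\<^bsub>free_group S\<^esub>"
    by (auto simp: one_free_group)
qed (auto simp: carrier_free_group mult_free_group one_free_group reduce_word_assoc
    reduce_word_reduced)

lemma free_gen_in_carrier: "x \<in> S \<Longrightarrow> free_gen x \<in> carrier (free_group S)"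
  by (simp add: carrier_free_group free_gen_def)

lemma inv_free_gen: "x \<in> S \<Longrightarrow> inv\<^bsub>free_group S\<^esub> [(x, True)] = [(x, False)]"
  by (rule group.inv_equality[OF group_free_group])
    (auto simp: carrier_free_group mult_free_group one_free_group reduce_word_def inv_letter_def)

lemma Cons_eq_mult_free_group:
  "l # w \<in> carrier (free_group S) \<Longrightarrow> l # w = [l] \<otimes>\<^bsub>free_group S\<^esub> w"
  by (cases w)
    (auto simp: carrier_free_group mult_free_group reduce_word_append reduce_word_reduced
      dest: reduced_word_ConsD)

lemma free_group_generated: "carrier (free_group S) \<subseteq> generate (free_group S) (free_gen ` S)"
proof
  fix w
  assume "w \<in> carrier (free_group S)"
  then show "w \<in> generate (free_group S) (free_gen ` S)"
  proof (induction w)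
    case Nil
    then show ?case using generate.one[of "free_group S"] by (simp add: one_free_group)
  next
    case (Cons l w)
    obtain x b where l: "l = (x, b)" by (cases l)
    have x: "x \<in> S" using Cons.prems l by (simp add: carrier_free_group)
    have "[l] \<in> generate (free_group S) (free_gen ` S)"
    proof (cases b)
      case True
      then show ?thesis using x l by (auto simp: free_gen_def intro: generate.incl)
    next
      case False
      have "inv\<^bsub>free_group S\<^esub> (free_gen x) \<in> generate (free_group S) (free_gen ` S)"
        using x by (auto intro: generate.inv)
      then show ?thesis using False l x by (simp add: free_gen_def inv_free_gen)
    qed
    moreover have "w \<in> carrier (free_group S)"
      using Cons.prems by (auto simp: carrier_free_group dest: reduced_word_ConsD)
    ultimately show ?case
      using Cons_eq_mult_free_group[OF Cons.prems] Cons.IH generate.eng by metis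
  qed
qed

section \<open>The lattice \<open>\<int>\<^sup>n\<close>\<close>

definition int_vector_group :: "nat \<Rightarrow> (nat \<Rightarrow> int) monoid" where
  "int_vector_group n =
     \<lparr>carrier = {v. \<forall>i\<ge>n. v i = 0}, monoid.mult = (\<lambda>u v i. u i + v i), one = (\<lambda>i. 0)\<rparr>"

lemma carrier_int_vector_group: "v \<in> carrier (int_vector_group n) \<longleftrightarrow> (\<forall>i\<ge>n. v i = 0)"
  by (simp add: int_vector_group_def)

lemma mult_int_vector_group [simp]: "u \<otimes>\<^bsub>int_vector_group n\<^esub> v = (\<lambda>i. u i + v i)"
  by (simp add: int_vector_group_def)

lemma one_int_vector_group [simp]: "\<one>\<^bsub>int_vector_group n\<^esub> = (\<lambda>i. 0)"
  by (simp add: int_vector_group_def)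

lemma comm_group_int_vector_group: "comm_group (int_vector_group n)"
proof (rule comm_groupI)
  fix v
  assume "v \<in> carrier (int_vector_group n)"
  then show "\<exists>w\<in>carrier (int_vector_group n). w \<otimes>\<^bsub>int_vector_group n\<^esub> v = \<one>\<^bsub>int_vector_group n\<^esub>"
    by (intro bexI[of _ "\<lambda>i. - v i"]) (auto simp: int_vector_group_def)
qed (auto simp: int_vector_group_def)

lemma group_int_vector_group: "group (int_vector_group n)"
  using comm_group_int_vector_group comm_group_def by blast

lemma inv_int_vector_group:
  "v \<in> carrier (int_vector_group n) \<Longrightarrow> inv\<^bsub>int_vector_group n\<^esub> v = (\<lambda>i. - v i)"
  by (rule group.inv_equality[OF group_int_vector_group]) (auto simp: carrier_int_vector_group)

lemma nat_pow_int_vector_group: "v [^]\<^bsub>int_vector_group n\<^esub> (k::nat) = (\<lambda>i. int k * v i)"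
  by (induction k) (auto simp: algebra_simps)

lemma int_pow_int_vector_group:
  "v \<in> carrier (int_vector_group n) \<Longrightarrow> v [^]\<^bsub>int_vector_group n\<^esub> (k::int) = (\<lambda>i. k * v i)"
  by (auto simp: int_pow_def2 nat_pow_int_vector_group inv_int_vector_group
      carrier_int_vector_group)

lemma finprod_int_vector_group:
  assumes "finite A" "f \<in> A \<rightarrow> carrier (int_vector_group n)"
  shows "finprod (int_vector_group n) f A = (\<lambda>j. \<Sum>i\<in>A. f i j)"
proof -
  interpret comm_group "int_vector_group n" by (rule comm_group_int_vector_group)
  show ?thesis
    using assms by (induction A rule: finite_induct) (simp_all add: Pi_def)
qed

lemma finprod_int_vector_group_scaled_basis:
  assumes "v \<in> carrier (int_vector_group n)"
  shows "finprod (int_vector_group n) (\<lambda>i. (\<lambda>j. if j = i then c else 0) [^]\<^bsub>int_vector_group n\<^esub> v i) {..<n}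
         = (\<lambda>j. c * v j)"
proof -
  have basis: "(\<lambda>j. if j = i then c else 0) \<in> carrier (int_vector_group n)" if "i < n" for i
    using that by (auto simp: carrier_int_vector_group)
  have "finprod (int_vector_group n) (\<lambda>i. (\<lambda>j. if j = i then c else 0) [^]\<^bsub>int_vector_group n\<^esub> v i) {..<n}
      = (\<lambda>j. \<Sum>i<n. v i * (if j = i then c else 0))"
    using basis by (subst finprod_int_vector_group)
      (auto simp: int_pow_int_vector_group carrier_int_vector_group)
  also have "\<dots> = (\<lambda>j. c * v j)"
  proof
    fix j
    have "(\<Sum>i<n. v i * (if j = i then c else 0)) = (\<Sum>i<n. if i = j then c * v j else 0)"
      by (rule sum.cong) auto
    then show "(\<Sum>i<n. v i * (if j = i then c else 0)) = c * v j"
      using assms by (simp add: carrier_int_vector_group)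
  qed
  finally show ?thesis .
qed

section \<open>Exponent sums\<close>

definition exponent_sum :: "('a \<times> bool) list \<Rightarrow> 'a \<Rightarrow> int" where
  "exponent_sum w x = (\<Sum>l\<leftarrow>w. if fst l = x then (if snd l then 1 else -1) else 0)"

lemma exponent_sum_reduce_word: "exponent_sum (reduce_word w) x = exponent_sum w x"
proof -
  have "exponent_sum (cancel_letter l v) x = exponent_sum (l # v) x" for l v
    by (cases v) (auto simp: exponent_sum_def inv_letter_def)
  then show ?thesis
    unfolding reduce_word_def by (induction w) (simp_all add: exponent_sum_def)
qed

lemma exponent_sum_append: "exponent_sum (u @ v) x = exponent_sum u x + exponent_sum v x"
  by (simp add: exponent_sum_def)

definition exponent_vector :: "nat \<Rightarrow> (nat \<times> bool) list \<Rightarrow> nat \<Rightarrow> int" where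
  "exponent_vector n w = (\<lambda>i. if i < n then exponent_sum w i else 0)"

lemma exponent_vector_hom: "exponent_vector n \<in> hom (free_group S) (int_vector_group n)"
  by (rule homI) (auto simp: exponent_vector_def carrier_int_vector_group mult_free_group
      exponent_sum_reduce_word exponent_sum_append)

lemma exponent_vector_free_gen:
  "exponent_vector n (free_gen k) = (\<lambda>j. if j < n \<and> j = k then 1 else 0)"
  by (auto simp: exponent_vector_def exponent_sum_def free_gen_def)

section \<open>Abelianizations that are free abelian\<close>

lemma (in group_hom) derived_subset_kernel:
  assumes "comm_group H"
  shows "derived G (carrier G) \<subseteq> kernel G H h"
proof -
  have "h ` derived G (carrier G) = derived H (h ` carrier G)"
    by (rule derived_img[symmetric]) simp
  also have "\<dots> = {\<one>\<^bsub>H\<^esub>}"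
    by (rule comm_group.derived_eq_singleton[OF assms]) auto
  finally show ?thesis
    using G.derived_in_carrier[of "carrier G"] by (auto simp: kernel_def)
qed

lemma comm_group_abelianization: "group G \<Longrightarrow> comm_group (abelianization G)"
  unfolding abelianization_def by (rule group.derived_quot_is_comm_group)

lemma (in group_hom) abelianization_universal:
  assumes "comm_group H"
  obtains \<psi> where "\<psi> \<in> hom (abelianization G) H"
    and "\<And>x. x \<in> carrier G \<Longrightarrow> \<psi> (derived G (carrier G) #>\<^bsub>G\<^esub> x) = h x"
  using FactGroup_universal_kernel[OF G.derived_self_is_normal derived_subset_kernel[OF assms]]
  unfolding abelianization_def by metis

lemma (in comm_group) hom_from_int_vector_group:
  assumes "y \<in> {..<n} \<rightarrow> carrier G"
  shows "(\<lambda>v. finprod G (\<lambda>i. y i [^] v i) {..<n}) \<in> hom (int_vector_group n) G"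
proof (rule homI)
  fix v :: "nat \<Rightarrow> int"
  show "finprod G (\<lambda>i. y i [^] v i) {..<n} \<in> carrier G"
    using assms by (intro finprod_closed) (auto simp: Pi_iff)
next
  fix u v :: "nat \<Rightarrow> int"
  have "finprod G (\<lambda>i. y i [^] (u \<otimes>\<^bsub>int_vector_group n\<^esub> v) i) {..<n}
      = finprod G (\<lambda>i. y i [^] u i \<otimes> y i [^] v i) {..<n}"
    using assms by (intro finprod_cong') (auto simp: int_pow_mult Pi_iff)
  also have "\<dots> = finprod G (\<lambda>i. y i [^] u i) {..<n} \<otimes> finprod G (\<lambda>i. y i [^] v i) {..<n}"
    using assms by (intro finprod_multf) (auto simp: Pi_iff)
  finally show "finprod G (\<lambda>i. y i [^] (u \<otimes>\<^bsub>int_vector_group n\<^esub> v) i) {..<n}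
      = finprod G (\<lambda>i. y i [^] u i) {..<n} \<otimes> finprod G (\<lambda>i. y i [^] v i) {..<n}" .
qed

lemma (in comm_group) hom_finprod_pow:
  assumes "comm_group K" "h \<in> hom G K" "y \<in> A \<rightarrow> carrier G" "finite A"
  shows "h (finprod G (\<lambda>i. y i [^] v i) A) = finprod K (\<lambda>i. h (y i) [^]\<^bsub>K\<^esub> (v i :: int)) A"
proof -
  interpret K: comm_group K by (rule assms(1))
  interpret group_hom G K h
    using assms(2) by (simp add: group_hom_def group_hom_axioms_def is_group K.is_group)
  show ?thesis
    using assms(4,3) by (induction A rule: finite_induct) (simp_all add: Pi_def hom_int_pow)
qed

lemma (in comm_group) image_hom_from_int_vector_group:
  fixes n :: nat
  assumes y: "y \<in> {..<n} \<rightarrow> carrier G" and gen: "carrier G \<subseteq> generate G (y ` {..<n})"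
  shows "(\<lambda>v. finprod G (\<lambda>i. y i [^] v i) {..<n}) ` carrier (int_vector_group n) = carrier G"
proof -
  interpret Z: comm_group "int_vector_group n" by (rule comm_group_int_vector_group)
  interpret \<theta>: group_hom "int_vector_group n" G "\<lambda>v. finprod G (\<lambda>i. y i [^] v i) {..<n}"
    using hom_from_int_vector_group[OF y]
    by (simp add: group_hom_def group_hom_axioms_def Z.is_group is_group)
  have "y i = finprod G (\<lambda>j. y j [^] (if j = i then 1 else 0 :: int)) {..<n}" if "i < n" for i
  proof -
    have "finprod G (\<lambda>j. y j [^] (if j = i then 1 else 0 :: int)) {..<n}
        = finprod G (\<lambda>j. if i = j then y j else \<one>) {..<n}"
      using y by (intro finprod_cong') (auto simp: Pi_iff int_pow_1)
    also have "\<dots> = y i"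
      using y that by (intro finprod_singleton) auto
    finally show ?thesis by simp
  qed
  then have "y ` {..<n} \<subseteq> (\<lambda>v. finprod G (\<lambda>i. y i [^] v i) {..<n}) ` carrier (int_vector_group n)"
    by (force simp: carrier_int_vector_group)
  then have "generate G (y ` {..<n})
      \<subseteq> (\<lambda>v. finprod G (\<lambda>i. y i [^] v i) {..<n}) ` carrier (int_vector_group n)"
    by (intro generate_subgroup_incl \<theta>.img_is_subgroup)
  then show ?thesis
    using gen \<theta>.hom_closed by blast
qed

theorem int_vector_group_iso_abelianization:
  assumes H: "group H" and x: "x \<in> {..<n} \<rightarrow> carrier H"
    and gen: "carrier H \<subseteq> generate H (x ` {..<n})"
    and \<phi>: "\<phi> \<in> hom H (int_vector_group n)"
    and \<phi>x: "\<And>i. i < n \<Longrightarrow> \<phi> (x i) = (\<lambda>j. if j = i then c else 0)"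
    and c: "c \<noteq> 0"
  shows "int_vector_group n \<cong> abelianization H"
proof -
  interpret H: group H by (rule H)
  interpret Z: comm_group "int_vector_group n" by (rule comm_group_int_vector_group)
  interpret \<phi>: group_hom H "int_vector_group n" \<phi>
    using \<phi> by (simp add: group_hom_def group_hom_axioms_def H Z.is_group)
  define Q where "Q = abelianization H"
  define \<pi> where "\<pi> = r_coset H (derived H (carrier H))"
  interpret D: normal "derived H (carrier H)" H by (rule H.derived_self_is_normal)
  interpret Q: comm_group Q
    unfolding Q_def abelianization_def by (rule H.derived_quot_is_comm_group)
  interpret \<pi>: group_hom H Q \<pi>
    using D.r_coset_hom_Mod unfolding \<pi>_def Q_def abelianization_def
    by (simp add: group_hom_def group_hom_axioms_def H D.factorgroup_is_group)
  have \<pi>x: "(\<lambda>i. \<pi> (x i)) \<in> {..<n} \<rightarrow> carrier Q"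
    using x by (auto simp: Pi_iff)
  define \<theta> where "\<theta> = (\<lambda>v :: nat \<Rightarrow> int. finprod Q (\<lambda>i. \<pi> (x i) [^]\<^bsub>Q\<^esub> v i) {..<n})"
  obtain \<psi> where \<psi>: "\<psi> \<in> hom Q (int_vector_group n)" and \<psi>\<pi>: "\<And>h. h \<in> carrier H \<Longrightarrow> \<psi> (\<pi> h) = \<phi> h"
    using \<phi>.abelianization_universal[OF comm_group_int_vector_group] unfolding Q_def \<pi>_def by metis
  have \<psi>\<theta>: "\<psi> (\<theta> v) = (\<lambda>j. c * v j)" if v: "v \<in> carrier (int_vector_group n)" for v
  proof -
    have "\<psi> (\<theta> v) = finprod (int_vector_group n)
        (\<lambda>i. \<psi> (\<pi> (x i)) [^]\<^bsub>int_vector_group n\<^esub> v i) {..<n}"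
      unfolding \<theta>_def using \<pi>x by (intro Q.hom_finprod_pow comm_group_int_vector_group \<psi>) auto
    also have "\<dots> = finprod (int_vector_group n)
        (\<lambda>i. (\<lambda>j. if j = i then c else 0) [^]\<^bsub>int_vector_group n\<^esub> v i) {..<n}"
      using x by (intro Z.finprod_cong')
        (auto simp: \<psi>\<pi> \<phi>x carrier_int_vector_group int_pow_int_vector_group Pi_iff)
    also have "\<dots> = (\<lambda>j. c * v j)"
      using v by (rule finprod_int_vector_group_scaled_basis)
    finally show ?thesis .
  qed
  have "inj_on \<theta> (carrier (int_vector_group n))"
  proof (rule inj_onI)
    fix u v
    assume "u \<in> carrier (int_vector_group n)" "v \<in> carrier (int_vector_group n)" "\<theta> u = \<theta> v"
    then have "(\<lambda>j. c * u j) = (\<lambda>j. c * v j)" using \<psi>\<theta> by metis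
    then show "u = v" using c by (auto simp: fun_eq_iff)
  qed
  moreover have "\<theta> ` carrier (int_vector_group n) = carrier Q"
  proof -
    have "carrier Q = \<pi> ` carrier H"
      unfolding Q_def \<pi>_def abelianization_def by (simp add: carrier_FactGroup)
    also have "\<dots> \<subseteq> generate Q ((\<lambda>i. \<pi> (x i)) ` {..<n})"
      using gen x \<pi>.generate_img[of "x ` {..<n}"] by (auto simp: Pi_iff image_image)
    finally show ?thesis
      unfolding \<theta>_def by (rule Q.image_hom_from_int_vector_group[OF \<pi>x])
  qed
  ultimately have "\<theta> \<in> iso (int_vector_group n) Q"
    using Q.hom_from_int_vector_group[OF \<pi>x] by (simp add: iso_iff \<theta>_def)
  then show ?thesis
    unfolding Q_def by (rule is_isoI)
qed

section \<open>The abelianizations of \<open>G\<close> and of the surface group\<close>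

lemma (in group) carrier_subgroup_generated_generate:
  assumes "S \<subseteq> carrier G"
  shows "carrier (subgroup_generated G S) \<subseteq> generate (subgroup_generated G S) S"
proof -
  have "S \<subseteq> carrier (subgroup_generated G S)"
    using assms by (rule subgroup_generated_subset_carrier_subset)
  then show ?thesis
    using carrier_subgroup_generated[of "subgroup_generated G S" S] by (simp add: Int_absorb1)
qed

lemma int_vector_group_iso_abelianization_twisted_powers:
  fixes n N :: nat and m :: "nat \<Rightarrow> int"
  assumes "N \<ge> 1"
  defines "F \<equiv> free_group {0..n}"
  shows "int_vector_group n \<cong> abelianization (subgroup_generated F
           ((\<lambda>i. free_gen i [^]\<^bsub>F\<^esub> N \<otimes>\<^bsub>F\<^esub> free_gen n [^]\<^bsub>F\<^esub> (- m i)) ` {0..<n}))"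
proof -
  interpret F: group F unfolding F_def by (rule group_free_group)
  interpret Z: comm_group "int_vector_group n" by (rule comm_group_int_vector_group)
  define \<alpha> where "\<alpha> = (\<lambda>i. free_gen i [^]\<^bsub>F\<^esub> N \<otimes>\<^bsub>F\<^esub> free_gen n [^]\<^bsub>F\<^esub> (- m i))"
  define H where "H = subgroup_generated F (\<alpha> ` {..<n})"
  have gen: "free_gen k \<in> carrier F" if "k \<le> n" for k
    using that unfolding F_def by (auto intro!: free_gen_in_carrier)
  have \<alpha>: "\<alpha> ` {..<n} \<subseteq> carrier F"
    using gen by (auto simp: \<alpha>_def)
  interpret E: group_hom F "int_vector_group n" "exponent_vector n"
    using exponent_vector_hom unfolding F_def
    by (simp add: group_hom_def group_hom_axioms_def group_free_group Z.is_group)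
  have "int_vector_group n \<cong> abelianization H"
  proof (rule int_vector_group_iso_abelianization[where c = "int N"])
    show "\<alpha> \<in> {..<n} \<rightarrow> carrier H"
      unfolding H_def using F.subgroup_generated_subset_carrier_subset[OF \<alpha>] by auto
    show "carrier H \<subseteq> generate H (\<alpha> ` {..<n})"
      unfolding H_def using \<alpha> by (rule F.carrier_subgroup_generated_generate)
    show "exponent_vector n \<in> hom H (int_vector_group n)"
      unfolding H_def by (rule F.hom_from_subgroup_generated[OF E.homh])
    fix i
    assume "i < n"
    then show "exponent_vector n (\<alpha> i) = (\<lambda>j. if j = i then int N else 0)"
      using gen
      by (auto simp: \<alpha>_def E.hom_nat_pow E.hom_int_pow int_pow_int_vector_group
          nat_pow_int_vector_group exponent_vector_free_gen carrier_int_vector_group fun_eq_iff)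
  qed (use \<open>N \<ge> 1\<close> in \<open>simp_all add: H_def F.group_subgroup_generated\<close>)
  then show ?thesis
    unfolding H_def \<alpha>_def by (simp add: atLeast0LessThan)
qed

lemma (in group) normal_closure_normal:
  assumes "S \<subseteq> carrier G"
  shows "normal_closure G S \<lhd> G"
  unfolding normal_closure_def
proof (rule normal_generateI)
  show "{g \<otimes> s \<otimes> inv g | g s. g \<in> carrier G \<and> s \<in> S} \<subseteq> carrier G"
    using assms by auto
next
  fix h k
  assume "h \<in> {g \<otimes> s \<otimes> inv g | g s. g \<in> carrier G \<and> s \<in> S}" "k \<in> carrier G"
  then obtain g s where gs: "g \<in> carrier G" "s \<in> S" "h = g \<otimes> s \<otimes> inv g"
    by auto
  then have "k \<otimes> h \<otimes> inv k = (k \<otimes> g) \<otimes> s \<otimes> inv (k \<otimes> g)"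
    using assms \<open>k \<in> carrier G\<close> by (auto simp: m_assoc inv_mult_group)
  then show "k \<otimes> h \<otimes> inv k \<in> {g \<otimes> s \<otimes> inv g | g s. g \<in> carrier G \<and> s \<in> S}"
    using gs \<open>k \<in> carrier G\<close> by blast
qed

lemma (in group) normal_closure_subset:
  assumes "N \<lhd> G" "S \<subseteq> N"
  shows "normal_closure G S \<subseteq> N"
  unfolding normal_closure_def
proof (rule generate_subgroup_incl)
  show "{g \<otimes> s \<otimes> inv g | g s. g \<in> carrier G \<and> s \<in> S} \<subseteq> N"
    using assms normal.inv_op_closed2 by fastforce
  show "subgroup N G"
    using assms(1) by (rule normal_imp_subgroup)
qed

lemma surface_relator_in_derived:
  fixes g :: nat
  defines "F \<equiv> free_group {0..<2*g}"
  shows "surface_relator g \<in> derived F (carrier F)"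
proof -
  interpret F: group F unfolding F_def by (rule group_free_group)
  have "foldr (\<lambda>k w. let F = free_group {0..<2*g}; a = free_gen (2*k); b = free_gen (2*k+1) in
          a \<otimes>\<^bsub>F\<^esub> b \<otimes>\<^bsub>F\<^esub> inv\<^bsub>F\<^esub> a \<otimes>\<^bsub>F\<^esub> inv\<^bsub>F\<^esub> b \<otimes>\<^bsub>F\<^esub> w) ks []
        \<in> derived F (carrier F)" if "set ks \<subseteq> {0..<g}" for ks
    using that
  proof (induction ks)
    case Nil
    have "\<one>\<^bsub>F\<^esub> \<in> derived F (carrier F)"
      by (rule subgroup.one_closed[OF F.derived_is_subgroup]) simp
    then show ?case
      by (simp add: F_def one_free_group)
  next
    case (Cons k ks)
    let ?a = "free_gen (2*k)" and ?b = "free_gen (2*k+1)"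
    have ab: "?a \<in> carrier F" "?b \<in> carrier F"
      using Cons.prems unfolding F_def by (auto intro!: free_gen_in_carrier)
    have "?a \<otimes>\<^bsub>F\<^esub> ?b \<otimes>\<^bsub>F\<^esub> inv\<^bsub>F\<^esub> ?a \<otimes>\<^bsub>F\<^esub> inv\<^bsub>F\<^esub> ?b \<in> derived F (carrier F)"
      using ab unfolding derived_def by (blast intro: generate.incl)
    then show ?case
      using Cons F.derived_is_subgroup[of "carrier F"] subgroup.m_closed
      by (fastforce simp: F_def Let_def)
  qed
  from this[of "[0..<g]"] show ?thesis
    unfolding surface_relator_def F_def by simp
qed

lemma group_surface_group: "group (surface_group g)"
proof -
  interpret F: group "free_group {0..<2*g}" by (rule group_free_group)
  have "surface_relator g \<in> carrier (free_group {0..<2*g})"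
    using surface_relator_in_derived F.derived_in_carrier by blast
  then show ?thesis
    unfolding surface_group_def
    by (intro normal.factorgroup_is_group F.normal_closure_normal) auto
qed

lemma (in normal) carrier_FactGroup_generate:
  assumes "S \<subseteq> carrier G" "carrier G \<subseteq> generate G S"
  shows "carrier (G Mod H) \<subseteq> generate (G Mod H) (r_coset G H ` S)"
proof -
  interpret \<pi>: group_hom G "G Mod H" "r_coset G H"
    using r_coset_hom_Mod by (simp add: group_hom_def group_hom_axioms_def factorgroup_is_group)
  have "carrier (G Mod H) = r_coset G H ` carrier G"
    by (simp add: carrier_FactGroup)
  also have "\<dots> \<subseteq> r_coset G H ` generate G S"
    using assms(2) by blast
  also have "\<dots> = generate (G Mod H) (r_coset G H ` S)"
    using assms(1) by (rule \<pi>.generate_img[symmetric])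
  finally show ?thesis .
qed

lemma int_vector_group_iso_abelianization_surface_group:
  "int_vector_group (2*g) \<cong> abelianization (surface_group g)"
proof -
  define F where "F = free_group {0..<2*g}"
  define R where "R = normal_closure F {surface_relator g}"
  interpret F: group F unfolding F_def by (rule group_free_group)
  interpret Z: comm_group "int_vector_group (2*g)" by (rule comm_group_int_vector_group)
  interpret E: group_hom F "int_vector_group (2*g)" "exponent_vector (2*g)"
    using exponent_vector_hom unfolding F_def
    by (simp add: group_hom_def group_hom_axioms_def group_free_group Z.is_group)
  have relator: "surface_relator g \<in> derived F (carrier F)"
    unfolding F_def by (rule surface_relator_in_derived)
  have R: "R \<lhd> F"
    unfolding R_def using relator F.derived_in_carrier by (intro F.normal_closure_normal) auto
  interpret R: normal R F by (rule R)
  have "R \<subseteq> derived F (carrier F)"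
    unfolding R_def using relator by (intro F.normal_closure_subset F.derived_self_is_normal) auto
  also have "\<dots> \<subseteq> kernel F (int_vector_group (2*g)) (exponent_vector (2*g))"
    by (rule E.derived_subset_kernel[OF comm_group_int_vector_group])
  finally obtain \<psi> where \<psi>: "\<psi> \<in> hom (F Mod R) (int_vector_group (2*g))"
    and \<psi>\<pi>: "\<And>h. h \<in> carrier F \<Longrightarrow> \<psi> (R #>\<^bsub>F\<^esub> h) = exponent_vector (2*g) h"
    using E.FactGroup_universal_kernel[OF R] by metis
  have gen: "free_gen ` {..<2*g} \<subseteq> carrier F"
    unfolding F_def by (auto intro!: free_gen_in_carrier)
  have "int_vector_group (2*g) \<cong> abelianization (F Mod R)"
  proof (rule int_vector_group_iso_abelianization[where c = 1])
    show "carrier (F Mod R) \<subseteq> generate (F Mod R) ((\<lambda>i. R #>\<^bsub>F\<^esub> free_gen i) ` {..<2*g})"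
      using R.carrier_FactGroup_generate[OF gen] free_group_generated[of "{0..<2*g}"]
      unfolding F_def by (simp add: atLeast0LessThan image_image)
  qed (use gen \<psi> \<psi>\<pi> in \<open>auto simp: R.factorgroup_is_group exponent_vector_free_gen fun_eq_iff
      carrier_FactGroup image_subset_iff\<close>)
  then show ?thesis
    unfolding surface_group_def F_def R_def .
qed

section \<open>Subgroups of \<open>N\<close>-th powers\<close>

abbreviation nth_powers :: "('a, 'b) monoid_scheme \<Rightarrow> nat \<Rightarrow> 'a set" where
  "nth_powers G N \<equiv> (\<lambda>x. x [^]\<^bsub>G\<^esub> N) ` carrier G"

lemma card_rcosets_iso_image:
  assumes \<theta>: "\<theta> \<in> iso G A" and "group G" and H: "H \<subseteq> carrier G"
  shows "card (rcosets\<^bsub>A\<^esub> (\<theta> ` H)) = card (rcosets\<^bsub>G\<^esub> H)"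
proof -
  have hom: "\<theta> \<in> hom G A" and inj: "inj_on \<theta> (carrier G)" and surj: "\<theta> ` carrier G = carrier A"
    using \<theta> by (auto simp: iso_def bij_betw_def)
  have "rcosets\<^bsub>A\<^esub> (\<theta> ` H) = (\<Union>v\<in>carrier G. {\<theta> ` H #>\<^bsub>A\<^esub> \<theta> v})"
    unfolding RCOSETS_def surj[symmetric] by blast
  also have "\<dots> = (\<Union>v\<in>carrier G. {\<theta> ` (H #>\<^bsub>G\<^esub> v)})"
    using coset_hom(2)[OF hom H] by simp
  also have "\<dots> = image \<theta> ` (rcosets\<^bsub>G\<^esub> H)"
    unfolding RCOSETS_def by blast
  finally have "rcosets\<^bsub>A\<^esub> (\<theta> ` H) = image \<theta> ` (rcosets\<^bsub>G\<^esub> H)" .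
  moreover have "inj_on (image \<theta>) (rcosets\<^bsub>G\<^esub> H)"
    using inj monoid.r_coset_subset_G[OF group.is_monoid[OF \<open>group G\<close>] H]
    by (auto simp: inj_on_def RCOSETS_def inj_on_image_eq_iff)
  ultimately show ?thesis
    by (simp add: card_image)
qed

lemma hom_image_nth_powers:
  assumes "\<theta> \<in> hom G A" "\<theta> ` carrier G = carrier A" "group G" "group A"
  shows "\<theta> ` nth_powers G N = nth_powers A N"
proof -
  interpret group_hom G A \<theta>
    using assms by (simp add: group_hom_def group_hom_axioms_def)
  have "\<theta> ` nth_powers G N = (\<lambda>x. \<theta> x [^]\<^bsub>A\<^esub> N) ` carrier G"
    by (auto simp: image_image hom_nat_pow)
  also have "\<dots> = nth_powers A N"
    by (simp flip: assms(2) add: image_image)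
  finally show ?thesis .
qed

lemma (in comm_group) iso_subgroup_generated_nth_powers:
  assumes "inj_on (\<lambda>x. x [^] N) (carrier G)"
  shows "G \<cong> subgroup_generated G (nth_powers G N)"
proof -
  have "(\<lambda>x. x [^] N) \<in> hom G G"
    by (rule homI) (simp_all add: nat_pow_distrib)
  then have "(\<lambda>x. x [^] N) \<in> iso G (subgroup_generated G (nth_powers G N))"
    using assms iso_onto_image[OF is_group] by (simp add: mon_def)
  then show ?thesis
    by (rule is_isoI)
qed

lemma nth_powers_int_vector_group:
  "nth_powers (int_vector_group n) N = {w \<in> carrier (int_vector_group n). \<forall>i. int N dvd w i}"
proof (intro equalityI subsetI)
  fix w
  assume w: "w \<in> {w \<in> carrier (int_vector_group n). \<forall>i. int N dvd w i}"
  then have "w = (\<lambda>i. w i div int N) [^]\<^bsub>int_vector_group n\<^esub> N"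
    by (auto simp: nat_pow_int_vector_group fun_eq_iff)
  moreover have "(\<lambda>i. w i div int N) \<in> carrier (int_vector_group n)"
    using w by (simp add: carrier_int_vector_group)
  ultimately show "w \<in> nth_powers (int_vector_group n) N"
    by blast
qed (auto simp: nat_pow_int_vector_group carrier_int_vector_group)

lemma r_coset_nth_powers_int_vector_group:
  assumes v: "v \<in> carrier (int_vector_group n)"
  shows "nth_powers (int_vector_group n) N #>\<^bsub>int_vector_group n\<^esub> v
         = {w \<in> carrier (int_vector_group n). \<forall>i. int N dvd w i - v i}"
proof (intro equalityI subsetI)
  fix w
  assume "w \<in> nth_powers (int_vector_group n) N #>\<^bsub>int_vector_group n\<^esub> v"
  then show "w \<in> {w \<in> carrier (int_vector_group n). \<forall>i. int N dvd w i - v i}"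
    using v by (auto simp: r_coset_def nth_powers_int_vector_group carrier_int_vector_group)
next
  fix w
  assume "w \<in> {w \<in> carrier (int_vector_group n). \<forall>i. int N dvd w i - v i}"
  then have "(\<lambda>i. w i - v i) \<in> nth_powers (int_vector_group n) N"
    using v by (simp add: nth_powers_int_vector_group carrier_int_vector_group)
  moreover have "w = (\<lambda>i. w i - v i) \<otimes>\<^bsub>int_vector_group n\<^esub> v"
    by simp
  ultimately show "w \<in> nth_powers (int_vector_group n) N #>\<^bsub>int_vector_group n\<^esub> v"
    unfolding r_coset_def by blast
qed

lemma card_int_vector_box:
  "card {b \<in> carrier (int_vector_group n). \<forall>i<n. b i \<in> {0..<int N}} = N ^ n"
proof -
  have "bij_betw (\<lambda>b. restrict b {..<n})
      {b \<in> carrier (int_vector_group n). \<forall>i<n. b i \<in> {0..<int N}} (\<Pi>\<^sub>E i\<in>{..<n}. {0..<int N})"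
    by (rule bij_betw_byWitness[where f' = "\<lambda>u i. if i < n then u i else 0"])
      (auto simp: carrier_int_vector_group fun_eq_iff PiE_def extensional_def Pi_def)
  then show ?thesis
    by (simp add: bij_betw_same_card card_PiE)
qed

text \<open>The residues modulo \<open>N\<close> form a system of representatives.\<close>

lemma card_rcosets_nth_powers_int_vector_group:
  assumes "N \<ge> 1"
  shows "card (rcosets\<^bsub>int_vector_group n\<^esub> (nth_powers (int_vector_group n) N)) = N ^ n"
proof -
  define B where "B = {b \<in> carrier (int_vector_group n). \<forall>i<n. b i \<in> {0..<int N}}"
  let ?coset = "\<lambda>b. nth_powers (int_vector_group n) N #>\<^bsub>int_vector_group n\<^esub> b"
  have "rcosets\<^bsub>int_vector_group n\<^esub> (nth_powers (int_vector_group n) N) = ?coset ` B"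
  proof (intro equalityI subsetI)
    fix C
    assume "C \<in> rcosets\<^bsub>int_vector_group n\<^esub> (nth_powers (int_vector_group n) N)"
    then obtain v where v: "v \<in> carrier (int_vector_group n)" "C = ?coset v"
      by (auto simp: RCOSETS_def)
    define b where "b = (\<lambda>i. v i mod int N)"
    have b: "b \<in> B"
      using v assms by (auto simp: B_def b_def carrier_int_vector_group)
    then have "C = ?coset b"
      using v by (auto simp: B_def b_def r_coset_nth_powers_int_vector_group simp flip: mod_eq_dvd_iff)
    then show "C \<in> ?coset ` B"
      using b by blast
  qed (auto simp: B_def RCOSETS_def)
  moreover have "inj_on ?coset B"
  proof (rule inj_onI)
    fix a b
    assume a: "a \<in> B" and b: "b \<in> B" and eq: "?coset a = ?coset b"
    have "a \<in> ?coset a"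
      using a by (simp add: B_def r_coset_nth_powers_int_vector_group)
    then have "\<forall>i. int N dvd a i - b i"
      using b eq by (simp add: B_def r_coset_nth_powers_int_vector_group)
    then have congruent: "a i mod int N = b i mod int N" for i
      by (simp add: mod_eq_dvd_iff)
    have "a i = b i" for i
    proof (cases "i < n")
      case True
      then have "a i mod int N = a i" "b i mod int N = b i"
        using a b by (auto simp: B_def)
      then show ?thesis using congruent[of i] by metis
    next
      case False
      then show ?thesis using a b by (auto simp: B_def carrier_int_vector_group)
    qed
    then show "a = b"
      by (rule ext)
  qed
  ultimately show ?thesis
    using card_int_vector_box[of n N] by (simp add: card_image B_def)
qed

lemma inj_on_nth_power_int_vector_group:
  fixes N :: nat
  assumes "N \<ge> 1"
  shows "inj_on (\<lambda>v. v [^]\<^bsub>int_vector_group n\<^esub> N) (carrier (int_vector_group n))"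
  using assms by (simp add: inj_on_def nat_pow_int_vector_group fun_eq_iff)

lemma iso_inj_on_nth_power:
  fixes N :: nat
  assumes \<theta>: "\<theta> \<in> iso G A" and "group G" "group A"
    and inj_pow: "inj_on (\<lambda>x. x [^]\<^bsub>G\<^esub> N) (carrier G)"
  shows "inj_on (\<lambda>x. x [^]\<^bsub>A\<^esub> N) (carrier A)"
proof (rule inj_onI)
  interpret \<theta>: group_hom G A \<theta>
    using assms by (simp add: group_hom_def group_hom_axioms_def iso_def)
  have inj: "inj_on \<theta> (carrier G)" and surj: "\<theta> ` carrier G = carrier A"
    using \<theta> by (auto simp: iso_def bij_betw_def)
  fix x y
  assume "x \<in> carrier A" "y \<in> carrier A" and eq: "x [^]\<^bsub>A\<^esub> N = y [^]\<^bsub>A\<^esub> N"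
  then obtain u v where u: "u \<in> carrier G" "x = \<theta> u" and v: "v \<in> carrier G" "y = \<theta> v"
    using surj by blast
  then have "\<theta> (u [^]\<^bsub>G\<^esub> N) = \<theta> (v [^]\<^bsub>G\<^esub> N)"
    using eq by (simp add: \<theta>.hom_nat_pow)
  then have "u [^]\<^bsub>G\<^esub> N = v [^]\<^bsub>G\<^esub> N"
    using u v by (auto intro: inj_onD[OF inj])
  then show "x = y"
    using inj_pow u v by (auto dest: inj_onD)
qed

theorem nth_powers_of_free_abelian:
  assumes "N \<ge> 1" and iso: "int_vector_group n \<cong> A" and "comm_group A"
  shows "card (rcosets\<^bsub>A\<^esub> (nth_powers A N)) = N ^ n"
    and "A \<cong> subgroup_generated A (nth_powers A N)"
proof -
  interpret A: comm_group A by (rule assms(3))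
  interpret Z: comm_group "int_vector_group n" by (rule comm_group_int_vector_group)
  obtain \<theta> where \<theta>: "\<theta> \<in> iso (int_vector_group n) A"
    using iso by (auto simp: is_iso_def)
  interpret \<theta>: group_hom "int_vector_group n" A \<theta>
    using \<theta> by (simp add: group_hom_def group_hom_axioms_def iso_def Z.is_group A.is_group)
  have surj: "\<theta> ` carrier (int_vector_group n) = carrier A"
    using \<theta> by (auto simp: iso_def bij_betw_def)
  have "card (rcosets\<^bsub>A\<^esub> (nth_powers A N))
      = card (rcosets\<^bsub>A\<^esub> (\<theta> ` nth_powers (int_vector_group n) N))"
    using hom_image_nth_powers[OF \<theta>.homh surj Z.is_group A.is_group] by simp
  also have "\<dots> = card (rcosets\<^bsub>int_vector_group n\<^esub> (nth_powers (int_vector_group n) N))"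
    using \<theta> by (intro card_rcosets_iso_image) auto
  also have "\<dots> = N ^ n"
    using \<open>N \<ge> 1\<close> by (rule card_rcosets_nth_powers_int_vector_group)
  finally show "card (rcosets\<^bsub>A\<^esub> (nth_powers A N)) = N ^ n" .
  have "inj_on (\<lambda>x. x [^]\<^bsub>A\<^esub> N) (carrier A)"
    using \<theta> Z.is_group A.is_group inj_on_nth_power_int_vector_group[OF \<open>N \<ge> 1\<close>]
    by (rule iso_inj_on_nth_power)
  then show "A \<cong> subgroup_generated A (nth_powers A N)"
    by (rule A.iso_subgroup_generated_nth_powers)
qed

theorem mainTheorem4:
  fixes g N :: nat and f :: "(nat \<times> bool) list \<Rightarrow> int"
  defines "F \<equiv> punctured_group g"
    and "\<beta> \<equiv> free_gen (2*g)"
  assumes "g \<ge> 1" and "N \<ge> 1"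
    and "f \<in> hom F integer_group"
    and "f \<beta> = int N"
  shows "let \<alpha> = (\<lambda>i. (free_gen i [^]\<^bsub>F\<^esub> N) \<otimes>\<^bsub>F\<^esub> (\<beta> [^]\<^bsub>F\<^esub> (- f (free_gen i))));
             G = subgroup_generated F (\<alpha> ` {0..<2*g});
             A = abelianization (surface_group g);
             NA = (\<lambda>x. x [^]\<^bsub>A\<^esub> N) ` carrier A
         in card (rcosets\<^bsub>A\<^esub> NA) = N ^ (2*g)
            \<and> abelianization G \<cong> subgroup_generated A NA"
proof -
  define G where "G = subgroup_generated F
    ((\<lambda>i. free_gen i [^]\<^bsub>F\<^esub> N \<otimes>\<^bsub>F\<^esub> \<beta> [^]\<^bsub>F\<^esub> (- f (free_gen i))) ` {0..<2*g})"
  define A where "A = abelianization (surface_group g)"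
  have G: "int_vector_group (2*g) \<cong> abelianization G"
    using int_vector_group_iso_abelianization_twisted_powers[OF \<open>N \<ge> 1\<close>, of "2*g"]
    unfolding G_def F_def \<beta>_def punctured_group_def by simp
  have A: "int_vector_group (2*g) \<cong> A"
    unfolding A_def by (rule int_vector_group_iso_abelianization_surface_group)
  have "comm_group A"
    unfolding A_def by (rule comm_group_abelianization[OF group_surface_group])
  note powers = nth_powers_of_free_abelian[OF \<open>N \<ge> 1\<close> A this]
  have "abelianization G \<cong> subgroup_generated A (nth_powers A N)"
    using group.iso_sym[OF group_int_vector_group G] A powers(2) by (blast intro: iso_trans)
  then show ?thesis
    using powers(1) unfolding Let_def G_def A_def by simp
qed

end
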